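(* Let $\mathcal G$ be a finite groupoid and $\alpha=(S_g,\alpha_g)_{g\in\mathcal G}$ a unital partial action of $\mathcal G$ on a commutative ring $S$ with $S_g=S1_g$ ($1_g$ central idempotents) and $S=\bigoplus_{z\in\mathcal G_0}S_z$. Let $\mathcal G_0=Z_1\,\dot\cup\cdots\dot\cup\,Z_r$ be the partition of $\mathcal G_0$ into the object sets of the connected components $\mathcal G_1,\dots,\mathcal G_r$ of $\mathcal G$ (where $\mathcal G_j$ is the full subgroupoid on $Z_j$), let $S_j=\bigoplus_{y\in Z_j}S_y$, let $\alpha_j=(S_g,\alpha_g)_{g\in\mathcal G_j}$ be the restricted partial action of $\mathcal G_j$ on $S_j$, and put $R=S^{\alpha_{\mathcal G}}$ and $R_j=S_j^{\alpha_j}$. Then $R\subseteq S$ is an $\alpha$-partial Galois extension if and only if $R_j\subseteq S_j$ is an $\alpha_j$-partial Galois extension for every $1\le j\le r$.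
   Context: A groupoid is a small category in which every morphism is invertible; $\mathcal G_0$ is its set of objects, identified with identity morphisms; $s(g),t(g)$ are source and target, $\mathcal G(x,y)=\{g:s(g)=x,t(g)=y\}$, $gh$ is defined iff $s(g)=t(h)$. Connected components are the full subgroupoids on the equivalence classes of $x\sim y\iff\mathcal G(x,y)\ne\emptyset$. A partial action $\alpha=(S_g,\alpha_g)_{g\in\mathcal G}$ of $\mathcal G$ on a ring $S$: for each $g$, $S_{t(g)}$ is an ideal of $S$, $S_g$ an ideal of $S_{t(g)}$, $\alpha_g:S_{g^{-1}}\to S_g$ a ring isomorphism; $\alpha_x=\mathrm{id}_{S_x}$ for $x\in\mathcal G_0$; for composable $(g,h)$, $\alpha_h^{-1}(S_{g^{-1}}\cap S_h)\subseteq S_{(gh)^{-1}}$ and $\alpha_g\alpha_h(a)=\alpha_{gh}(a)$ on that set. Unital means $S_g=S1_g$ with $1_g$ a central idempotent. For a partial action $\beta=(A_g,\beta_g)_{g\in\mathcal K}$ of a groupoid $\mathcal K$ on a ring $A$, the invariant subring is $A^{\beta}=\{a\in A:\beta_g(a1_{g^{-1}})=a1_g\ \forall g\in\mathcal K\}$. An extension $B\subseteq A$ is a $\beta$-partial Galois extension if $B=A^{\beta}$ and there exist $m\ge1$ and $a_i,b_i\in A$ ($1\le i\le m$) with $\sum_{i=1}^m a_i\beta_g(b_i1_{g^{-1}})=\delta_{z,g}1_z$ for all $z\in\mathcal K_0$, $g\in\mathcal K$, i.e. the sum equals $1_g$ when $g\in\mathcal K_0$ and $0$ when $g\notin\mathcal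 K_0$. *)

theory Defs
  imports Main
begin

text \<open>Objects are identified with identity morphisms: the object set is s ` G.\<close>

definition objs :: "'g set \<Rightarrow> ('g \<Rightarrow> 'g) \<Rightarrow> 'g set" where
  "objs G s = s ` G"

definition groupoid ::
  "'g set \<Rightarrow> ('g \<Rightarrow> 'g) \<Rightarrow> ('g \<Rightarrow> 'g) \<Rightarrow> ('g \<Rightarrow> 'g \<Rightarrow> 'g) \<Rightarrow> ('g \<Rightarrow> 'g) \<Rightarrow> bool" where
  "groupoid G s t mul iv \<longleftrightarrow>
     (\<forall>g\<in>G. s g \<in> G \<and> t g \<in> G) \<and>
     (\<forall>x\<in>objs G s. s x = x \<and> t x = x) \<and>
     (\<forall>g\<in>G. \<forall>h\<in>G. s g = t h \<longrightarrow>
        mul g h \<in> G \<and> s (mul g h) = s h \<and> t (mul g h) = t g) \<and>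
     (\<forall>g\<in>G. \<forall>h\<in>G. \<forall>k\<in>G. s g = t h \<longrightarrow> s h = t k \<longrightarrow>
        mul (mul g h) k = mul g (mul h k)) \<and>
     (\<forall>g\<in>G. mul (t g) g = g \<and> mul g (s g) = g) \<and>
     (\<forall>g\<in>G. iv g \<in> G \<and> s (iv g) = t g \<and> t (iv g) = s g \<and>
        mul (iv g) g = s g \<and> mul g (iv g) = t g)"

definition comp_objs :: "'g set \<Rightarrow> ('g \<Rightarrow> 'g) \<Rightarrow> ('g \<Rightarrow> 'g) \<Rightarrow> 'g \<Rightarrow> 'g set" where
  "comp_objs G s t x = {y \<in> objs G s. \<exists>g\<in>G. s g = x \<and> t g = y}"

definition components_objs :: "'g set \<Rightarrow> ('g \<Rightarrow> 'g) \<Rightarrow> ('g \<Rightarrow> 'g) \<Rightarrow> 'g set set" where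
  "components_objs G s t = comp_objs G s t ` objs G s"

definition full_sub :: "'g set \<Rightarrow> ('g \<Rightarrow> 'g) \<Rightarrow> ('g \<Rightarrow> 'g) \<Rightarrow> 'g set \<Rightarrow> 'g set" where
  "full_sub G s t Z = {g \<in> G. s g \<in> Z \<and> t g \<in> Z}"

definition principal :: "'a::comm_ring_1 \<Rightarrow> 'a set" where
  "principal c = {x * c | x. True}"

text \<open>Unital partial action (S_g = A 1_g, given by the idempotents e g) of the groupoid
  (K, s, t, mul, iv) on the ring A = principal u, whose unit is the idempotent u
  (for u = 1 this is the whole ring).\<close>

definition unital_partial_action ::
  "'g set \<Rightarrow> ('g \<Rightarrow> 'g) \<Rightarrow> ('g \<Rightarrow> 'g) \<Rightarrow> ('g \<Rightarrow> 'g \<Rightarrow> 'g) \<Rightarrow> ('g \<Rightarrow> 'g) \<Rightarrow>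
   'a::comm_ring_1 \<Rightarrow> ('g \<Rightarrow> 'a) \<Rightarrow> ('g \<Rightarrow> 'a \<Rightarrow> 'a) \<Rightarrow> bool" where
  "unital_partial_action K s t mul iv u e \<alpha> \<longleftrightarrow>
     u * u = u \<and>
     (\<forall>g\<in>K. e g * e g = e g) \<and>
     (\<forall>g\<in>K. e (t g) * u = e (t g)) \<and>
     (\<forall>g\<in>K. e g * e (t g) = e g) \<and>
     (\<forall>g\<in>K. bij_betw (\<alpha> g) (principal (e (iv g))) (principal (e g)) \<and>
        (\<forall>a\<in>principal (e (iv g)). \<forall>b\<in>principal (e (iv g)).
           \<alpha> g (a + b) = \<alpha> g a + \<alpha> g b \<and> \<alpha> g (a * b) = \<alpha> g a * \<alpha> g b)) \<and>
     (\<forall>x\<in>objs K s. \<forall>a\<in>principal (e x). \<alpha> x a = a) \<and>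
     (\<forall>g\<in>K. \<forall>h\<in>K. s g = t h \<longrightarrow>
        (\<forall>a\<in>principal (e (iv h)). \<alpha> h a \<in> principal (e (iv g)) \<longrightarrow>
           a \<in> principal (e (iv (mul g h))) \<and> \<alpha> g (\<alpha> h a) = \<alpha> (mul g h) a))"

definition invariants ::
  "'g set \<Rightarrow> ('g \<Rightarrow> 'g) \<Rightarrow> 'a::comm_ring_1 \<Rightarrow> ('g \<Rightarrow> 'a) \<Rightarrow> ('g \<Rightarrow> 'a \<Rightarrow> 'a) \<Rightarrow> 'a set" where
  "invariants K iv u e \<beta> =
     {a \<in> principal u. \<forall>g\<in>K. \<beta> g (a * e (iv g)) = a * e g}"

definition partial_galois ::
  "'a::comm_ring_1 set \<Rightarrow> 'g set \<Rightarrow> ('g \<Rightarrow> 'g) \<Rightarrow> ('g \<Rightarrow> 'g) \<Rightarrow> 'a \<Rightarrow> ('g \<Rightarrow> 'a) \<Rightarrow>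
   ('g \<Rightarrow> 'a \<Rightarrow> 'a) \<Rightarrow> bool" where
  "partial_galois B K s iv u e \<beta> \<longleftrightarrow>
     B = invariants K iv u e \<beta> \<and>
     (\<exists>m::nat. \<exists>a b :: nat \<Rightarrow> 'a. m \<ge> 1 \<and>
        (\<forall>i<m. a i \<in> principal u \<and> b i \<in> principal u) \<and>
        (\<forall>g\<in>K. (\<Sum>i<m. a i * \<beta> g (b i * e (iv g))) =
                 (if g \<in> objs K s then e g else 0)))"

end

theory Submission
  imports Defs
begin

text \<open>For a set Z of objects let 1_Z be the sum of the 1_y with y in Z. Since the 1_y are
  orthogonal idempotents and 1_g = 1_g 1_(t g), multiplication by 1_Z fixes 1_g if t g is in Z
  and kills it otherwise; likewise for 1_(g^-1) and s g. Hence multiplying a Galois coordinate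
  system of S by 1_Z gives one of S_Z for the full subgroupoid on Z. Conversely, source and
  target of a morphism lie in the same component, so the sum of coordinate systems of the
  components, padded with zeros to a common length, is one of S: all cross terms between
  different components vanish.\<close>

definition galois_coordinates ::
  "'g set \<Rightarrow> ('g \<Rightarrow> 'g) \<Rightarrow> ('g \<Rightarrow> 'g) \<Rightarrow> ('g \<Rightarrow> 'a::comm_ring_1) \<Rightarrow> ('g \<Rightarrow> 'a \<Rightarrow> 'a) \<Rightarrow>
   nat \<Rightarrow> (nat \<Rightarrow> 'a) \<Rightarrow> (nat \<Rightarrow> 'a) \<Rightarrow> bool" where
  "galois_coordinates K s iv e \<beta> m a b \<longleftrightarrow>
     (\<forall>g\<in>K. (\<Sum>i<m. a i * \<beta> g (b i * e (iv g))) = (if g \<in> objs K s then e g else 0))"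

lemma partial_galois_invariants_iff:
  "partial_galois (invariants K iv u e \<beta>) K s iv u e \<beta> \<longleftrightarrow>
     (\<exists>m a b. m \<ge> 1 \<and> (\<forall>i<m. a i \<in> principal u \<and> b i \<in> principal u) \<and>
        galois_coordinates K s iv e \<beta> m a b)"
  unfolding partial_galois_def galois_coordinates_def by blast

lemma principal_one [simp]: "principal (1::'a::comm_ring_1) = UNIV"
  unfolding principal_def by auto

lemma zero_in_principal [simp]: "0 \<in> principal c"
  unfolding principal_def by (auto intro: exI[of _ 0])

lemma mult_in_principal [simp]: "x * c \<in> principal c"
  unfolding principal_def by auto

lemma galois_coordinates_pad:
  assumes "galois_coordinates K s iv e \<beta> m a b" and "m \<le> n"
  shows "galois_coordinates K s iv e \<beta> n (\<lambda>i. if i < m then a i else 0) (\<lambda>i. if i < m then b i else 0)"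
proof -
  have "(\<Sum>i<n. (if i < m then a i else 0) * \<beta> g ((if i < m then b i else 0) * e (iv g))) =
        (\<Sum>i<m. a i * \<beta> g (b i * e (iv g)))" for g
    by (rule sum.mono_neutral_cong_right) (use \<open>m \<le> n\<close> in auto)
  then show ?thesis
    using assms(1) unfolding galois_coordinates_def by simp
qed

lemma galois_coordinates_common_length:
  assumes "finite P"
    and "\<forall>Z\<in>P. \<exists>m a b. m \<ge> 1 \<and> (\<forall>i<m. a i \<in> principal (c Z) \<and> b i \<in> principal (c Z)) \<and>
           galois_coordinates (K Z) s iv e \<beta> m a b"
  obtains n A B where "n \<ge> 1"
    and "\<forall>Z\<in>P. \<forall>i<n. A Z i \<in> principal (c Z) \<and> B Z i \<in> principal (c Z)"
    and "\<forall>Z\<in>P. galois_coordinates (K Z) s iv e \<beta> n (A Z) (B Z)"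
proof -
  from assms(2) obtain M A B
    where AB: "\<forall>Z\<in>P. \<forall>i<M Z. A Z i \<in> principal (c Z) \<and> B Z i \<in> principal (c Z)"
    and coords: "\<forall>Z\<in>P. galois_coordinates (K Z) s iv e \<beta> (M Z) (A Z) (B Z)"
    by metis
  define n where "n = max 1 (\<Sum>Z\<in>P. M Z)"
  have "M Z \<le> n" if "Z \<in> P" for Z
    using member_le_sum[OF that, of M] \<open>finite P\<close> unfolding n_def by simp
  show thesis
  proof (rule that[of n "\<lambda>Z i. if i < M Z then A Z i else 0" "\<lambda>Z i. if i < M Z then B Z i else 0"])
    show "n \<ge> 1"
      unfolding n_def by simp
    show "\<forall>Z\<in>P. \<forall>i<n. (if i < M Z then A Z i else 0) \<in> principal (c Z) \<and>
                       (if i < M Z then B Z i else 0) \<in> principal (c Z)"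
      using AB by simp
    show "\<forall>Z\<in>P. galois_coordinates (K Z) s iv e \<beta> n
                  (\<lambda>i. if i < M Z then A Z i else 0) (\<lambda>i. if i < M Z then B Z i else 0)"
      using coords galois_coordinates_pad \<open>\<And>Z. Z \<in> P \<Longrightarrow> M Z \<le> n\<close> by blast
  qed
qed

lemma mult_sum_orthogonal_idempotents:
  fixes e :: "'i \<Rightarrow> 'a::comm_ring_1"
  assumes "finite Z" "Z \<subseteq> I" "x \<in> I"
    and idem: "\<forall>y\<in>I. e y * e y = e y"
    and orth: "\<forall>y\<in>I. \<forall>z\<in>I. y \<noteq> z \<longrightarrow> e y * e z = 0"
  shows "(\<Sum>y\<in>Z. e y) * e x = (if x \<in> Z then e x else 0)"
proof -
  have "(\<Sum>y\<in>Z. e y) * e x = (\<Sum>y\<in>Z. if y = x then e x else 0)"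
    unfolding sum_distrib_right using assms by (intro sum.cong) auto
  then show ?thesis
    using \<open>finite Z\<close> by simp
qed

locale small_groupoid =
  fixes G :: "'g set" and s t :: "'g \<Rightarrow> 'g" and mul :: "'g \<Rightarrow> 'g \<Rightarrow> 'g" and iv :: "'g \<Rightarrow> 'g"
  assumes groupoid: "groupoid G s t mul iv"
begin

lemma source_in_objs: "g \<in> G \<Longrightarrow> s g \<in> objs G s"
  unfolding objs_def by simp

lemma inverse_closed: "g \<in> G \<Longrightarrow> iv g \<in> G \<and> s (iv g) = t g \<and> t (iv g) = s g"
  using groupoid unfolding groupoid_def by blast

lemma target_in_objs: "g \<in> G \<Longrightarrow> t g \<in> objs G s"
  using inverse_closed source_in_objs by metis

lemma objs_subset: "objs G s \<subseteq> G"
  using groupoid unfolding groupoid_def objs_def by blast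

lemma object_fixed: "x \<in> objs G s \<Longrightarrow> s x = x \<and> t x = x"
  using groupoid unfolding groupoid_def by blast

lemma mul_closed: "g \<in> G \<Longrightarrow> h \<in> G \<Longrightarrow> s g = t h \<Longrightarrow> mul g h \<in> G \<and> s (mul g h) = s h \<and> t (mul g h) = t g"
  using groupoid unfolding groupoid_def by blast

lemma objs_full_sub_iff:
  assumes "g \<in> full_sub G s t Z"
  shows "g \<in> objs (full_sub G s t Z) s \<longleftrightarrow> g \<in> objs G s"
proof
  show "g \<in> objs (full_sub G s t Z) s \<Longrightarrow> g \<in> objs G s"
    unfolding objs_def full_sub_def by blast
next
  assume "g \<in> objs G s"
  then have "g = s g"
    using object_fixed by simp
  with assms show "g \<in> objs (full_sub G s t Z) s"
    unfolding objs_def by blast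
qed

lemma comp_objs_subset: "comp_objs G s t x \<subseteq> objs G s"
  unfolding comp_objs_def by blast

lemma comp_objs_eq:
  assumes "y \<in> comp_objs G s t x"
  shows "comp_objs G s t y = comp_objs G s t x"
proof -
  from assms obtain h where h: "h \<in> G" "s h = x" "t h = y"
    unfolding comp_objs_def by blast
  have "\<exists>k'\<in>G. s k' = x \<and> t k' = z" if "k \<in> G" "s k = y" "t k = z" for k z
    using mul_closed[of k h] h that by blast
  moreover have "\<exists>k'\<in>G. s k' = y \<and> t k' = z" if "k \<in> G" "s k = x" "t k = z" for k z
    using mul_closed[of k "iv h"] inverse_closed[of h] h that by metis
  ultimately show ?thesis
    unfolding comp_objs_def by blast
qed

lemma components_disjoint: "pairwise disjnt (components_objs G s t)"
  unfolding components_objs_def pairwise_def disjnt_iff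
  by (auto dest: comp_objs_eq)

lemma morphism_in_component:
  assumes "g \<in> G"
  shows "\<exists>Z\<in>components_objs G s t. s g \<in> Z \<and> t g \<in> Z"
proof
  have "s g \<in> objs G s" "s (s g) = s g" "t (s g) = s g"
    using source_in_objs[OF assms] object_fixed by auto
  then show "s g \<in> comp_objs G s t (s g) \<and> t g \<in> comp_objs G s t (s g)"
    using assms target_in_objs objs_subset unfolding comp_objs_def by blast
  show "comp_objs G s t (s g) \<in> components_objs G s t"
    using source_in_objs[OF assms] unfolding components_objs_def by blast
qed

end

locale unital_groupoid_action = small_groupoid G s t mul iv
  for G :: "'g set" and s t mul iv +
  fixes e :: "'g \<Rightarrow> 'a::comm_ring_1" and \<alpha> :: "'g \<Rightarrow> 'a \<Rightarrow> 'a"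
  assumes finite_G: "finite G"
    and action: "unital_partial_action G s t mul iv 1 e \<alpha>"
    and objs_orthogonal: "\<forall>z\<in>objs G s. \<forall>w\<in>objs G s. z \<noteq> w \<longrightarrow> e z * e w = 0"
begin

lemma finite_objs: "finite (objs G s)"
  using finite_G unfolding objs_def by simp

lemma e_idempotent: "g \<in> G \<Longrightarrow> e g * e g = e g"
  using action unfolding unital_partial_action_def by blast

lemma e_mult_e_target: "g \<in> G \<Longrightarrow> e g * e (t g) = e g"
  using action unfolding unital_partial_action_def by blast

lemma e_mult_alpha: "g \<in> G \<Longrightarrow> e g * \<alpha> g (y * e (iv g)) = \<alpha> g (y * e (iv g))"
proof -
  assume g: "g \<in> G"
  have "bij_betw (\<alpha> g) (principal (e (iv g))) (principal (e g))"
    using action g unfolding unital_partial_action_def by blast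
  then have "\<alpha> g (y * e (iv g)) \<in> principal (e g)"
    using bij_betwE mult_in_principal by blast
  then show ?thesis
    using e_idempotent[OF g] unfolding principal_def by (auto simp: ac_simps)
qed

lemma block_unit_mult_e:
  assumes "Z \<subseteq> objs G s" "g \<in> G"
  shows "(\<Sum>y\<in>Z. e y) * e g = (if t g \<in> Z then e g else 0)"
proof -
  have "(\<Sum>y\<in>Z. e y) * e (t g) = (if t g \<in> Z then e (t g) else 0)"
    using assms finite_objs objs_subset target_in_objs objs_orthogonal e_idempotent
    by (intro mult_sum_orthogonal_idempotents[where I = "objs G s"])
       (auto intro: finite_subset)
  then show ?thesis
    using e_mult_e_target[OF \<open>g \<in> G\<close>] by (metis (no_types, lifting) mult.left_commute mult_zero_right)
qed

lemma block_unit_mult_e_inverse: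
  "Z \<subseteq> objs G s \<Longrightarrow> g \<in> G \<Longrightarrow> (\<Sum>y\<in>Z. e y) * e (iv g) = (if s g \<in> Z then e (iv g) else 0)"
  using block_unit_mult_e[of Z "iv g"] inverse_closed[of g] by simp

lemma block_element_mult_e_inverse:
  assumes "Z \<subseteq> objs G s" "g \<in> G" "y \<in> principal (\<Sum>y\<in>Z. e y)" "s g \<notin> Z"
  shows "y * e (iv g) = 0"
  using assms(3) block_unit_mult_e_inverse[OF assms(1,2)] assms(4)
  unfolding principal_def by (auto simp: mult.assoc)

lemma block_element_mult_alpha:
  assumes "Z \<subseteq> objs G s" "g \<in> G" "x \<in> principal (\<Sum>y\<in>Z. e y)" "t g \<notin> Z"
  shows "x * \<alpha> g (y * e (iv g)) = 0"
proof -
  obtain c where "x = c * (\<Sum>y\<in>Z. e y)"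
    using assms(3) unfolding principal_def by blast
  then have "x * \<alpha> g (y * e (iv g)) = c * ((\<Sum>y\<in>Z. e y) * e g) * \<alpha> g (y * e (iv g))"
    using e_mult_alpha[OF assms(2)] by (metis mult.assoc)
  then show ?thesis
    using block_unit_mult_e[OF assms(1,2)] assms(4) by simp
qed

lemma galois_coordinates_restrict:
  assumes Z: "Z \<subseteq> objs G s" and coords: "galois_coordinates G s iv e \<alpha> m a b"
  shows "galois_coordinates (full_sub G s t Z) s iv e \<alpha> m
           (\<lambda>i. a i * (\<Sum>y\<in>Z. e y)) (\<lambda>i. b i * (\<Sum>y\<in>Z. e y))"
  unfolding galois_coordinates_def
proof
  fix g assume g: "g \<in> full_sub G s t Z"
  then have gG: "g \<in> G" and "s g \<in> Z" "t g \<in> Z"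
    unfolding full_sub_def by auto
  then have "a i * (\<Sum>y\<in>Z. e y) * \<alpha> g (b i * (\<Sum>y\<in>Z. e y) * e (iv g)) =
             a i * \<alpha> g (b i * e (iv g))" for i
    using block_unit_mult_e[OF Z gG] block_unit_mult_e_inverse[OF Z gG] e_mult_alpha[OF gG]
    by (metis mult.assoc)
  then show "(\<Sum>i<m. a i * (\<Sum>y\<in>Z. e y) * \<alpha> g (b i * (\<Sum>y\<in>Z. e y) * e (iv g))) =
             (if g \<in> objs (full_sub G s t Z) s then e g else 0)"
    using coords gG objs_full_sub_iff[OF g] unfolding galois_coordinates_def by simp
qed

lemma galois_coordinates_glue:
  assumes "finite P" and P_objs: "\<forall>Z\<in>P. Z \<subseteq> objs G s" and "pairwise disjnt P"
    and P_saturated: "\<forall>g\<in>G. \<exists>Z\<in>P. s g \<in> Z \<and> t g \<in> Z"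
    and AB: "\<forall>Z\<in>P. \<forall>i<n. A Z i \<in> principal (\<Sum>y\<in>Z. e y) \<and> B Z i \<in> principal (\<Sum>y\<in>Z. e y)"
    and coords: "\<forall>Z\<in>P. galois_coordinates (full_sub G s t Z) s iv e \<alpha> n (A Z) (B Z)"
  shows "galois_coordinates G s iv e \<alpha> n (\<lambda>i. \<Sum>Z\<in>P. A Z i) (\<lambda>i. \<Sum>Z\<in>P. B Z i)"
  unfolding galois_coordinates_def
proof
  fix g assume g: "g \<in> G"
  with P_saturated obtain Z\<^sub>0 where Z\<^sub>0: "Z\<^sub>0 \<in> P" "s g \<in> Z\<^sub>0" "t g \<in> Z\<^sub>0"
    by blast
  have other: "s g \<notin> Z \<and> t g \<notin> Z" if "Z \<in> P" "Z \<noteq> Z\<^sub>0" for Z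
    using \<open>pairwise disjnt P\<close> Z\<^sub>0 that unfolding pairwise_def disjnt_iff by metis
  have "(\<Sum>Z\<in>P. A Z i) * \<alpha> g ((\<Sum>Z\<in>P. B Z i) * e (iv g)) = A Z\<^sub>0 i * \<alpha> g (B Z\<^sub>0 i * e (iv g))"
    if "i < n" for i
  proof -
    have "B Z i * e (iv g) = 0" "A Z i * \<alpha> g (y * e (iv g)) = 0" if "Z \<in> P" "Z \<noteq> Z\<^sub>0" for Z y
      using block_element_mult_e_inverse[OF _ g, of Z "B Z i"] block_element_mult_alpha[OF _ g, of Z "A Z i"]
        P_objs AB other[OF that] that(1) \<open>i < n\<close> by simp_all
    then have "(\<Sum>Z\<in>P. B Z i) * e (iv g) = (\<Sum>Z\<in>P. if Z = Z\<^sub>0 then B Z\<^sub>0 i * e (iv g) else 0)"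
      and "(\<Sum>Z\<in>P. A Z i) * \<alpha> g (B Z\<^sub>0 i * e (iv g)) =
           (\<Sum>Z\<in>P. if Z = Z\<^sub>0 then A Z\<^sub>0 i * \<alpha> g (B Z\<^sub>0 i * e (iv g)) else 0)"
      unfolding sum_distrib_right by (auto intro: sum.cong)
    then show ?thesis
      using \<open>finite P\<close> Z\<^sub>0(1) by simp
  qed
  moreover have "g \<in> full_sub G s t Z\<^sub>0"
    using g Z\<^sub>0 unfolding full_sub_def by blast
  ultimately show "(\<Sum>i<n. (\<Sum>Z\<in>P. A Z i) * \<alpha> g ((\<Sum>Z\<in>P. B Z i) * e (iv g))) =
                   (if g \<in> objs G s then e g else 0)"
    using coords Z\<^sub>0(1) objs_full_sub_iff unfolding galois_coordinates_def by simp
qed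

lemma partial_galois_full_sub:
  assumes "Z \<subseteq> objs G s" and "partial_galois (invariants G iv 1 e \<alpha>) G s iv 1 e \<alpha>"
  shows "partial_galois (invariants (full_sub G s t Z) iv (\<Sum>y\<in>Z. e y) e \<alpha>)
           (full_sub G s t Z) s iv (\<Sum>y\<in>Z. e y) e \<alpha>"
proof -
  from assms(2) obtain m a b where "m \<ge> 1" and coords: "galois_coordinates G s iv e \<alpha> m a b"
    unfolding partial_galois_invariants_iff by blast
  then show ?thesis
    unfolding partial_galois_invariants_iff using galois_coordinates_restrict[OF assms(1) coords]
    by (intro exI[of _ m] exI[of _ "\<lambda>i. a i * (\<Sum>y\<in>Z. e y)"] exI[of _ "\<lambda>i. b i * (\<Sum>y\<in>Z. e y)"])
       simp
qed

lemma partial_galois_glue: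
  assumes "finite P" and "\<forall>Z\<in>P. Z \<subseteq> objs G s" and "pairwise disjnt P"
    and "\<forall>g\<in>G. \<exists>Z\<in>P. s g \<in> Z \<and> t g \<in> Z"
    and "\<forall>Z\<in>P. partial_galois (invariants (full_sub G s t Z) iv (\<Sum>y\<in>Z. e y) e \<alpha>)
                 (full_sub G s t Z) s iv (\<Sum>y\<in>Z. e y) e \<alpha>"
  shows "partial_galois (invariants G iv 1 e \<alpha>) G s iv 1 e \<alpha>"
proof -
  obtain n A B where "n \<ge> 1"
    and "\<forall>Z\<in>P. \<forall>i<n. A Z i \<in> principal (\<Sum>y\<in>Z. e y) \<and> B Z i \<in> principal (\<Sum>y\<in>Z. e y)"
    and "\<forall>Z\<in>P. galois_coordinates (full_sub G s t Z) s iv e \<alpha> n (A Z) (B Z)"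
    using assms(5) unfolding partial_galois_invariants_iff
    by (rule galois_coordinates_common_length[OF \<open>finite P\<close>])
  with assms(1-4) have "galois_coordinates G s iv e \<alpha> n (\<lambda>i. \<Sum>Z\<in>P. A Z i) (\<lambda>i. \<Sum>Z\<in>P. B Z i)"
    by (intro galois_coordinates_glue)
  with \<open>n \<ge> 1\<close> show ?thesis
    unfolding partial_galois_invariants_iff by auto
qed

end

theorem proposition2p11:
  fixes G :: "'g set" and s t :: "'g \<Rightarrow> 'g" and mul :: "'g \<Rightarrow> 'g \<Rightarrow> 'g"
    and iv :: "'g \<Rightarrow> 'g"
    and e :: "'g \<Rightarrow> 'a::comm_ring_1" and \<alpha> :: "'g \<Rightarrow> 'a \<Rightarrow> 'a"
  assumes "groupoid G s t mul iv"
    and "finite G"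
    and "unital_partial_action G s t mul iv 1 e \<alpha>"
    and "(\<Sum>z\<in>objs G s. e z) = 1"
    and "\<forall>z\<in>objs G s. \<forall>w\<in>objs G s. z \<noteq> w \<longrightarrow> e z * e w = 0"
  shows "partial_galois (invariants G iv 1 e \<alpha>) G s iv 1 e \<alpha> \<longleftrightarrow>
    (\<forall>Z\<in>components_objs G s t.
       partial_galois (invariants (full_sub G s t Z) iv (\<Sum>y\<in>Z. e y) e \<alpha>)
         (full_sub G s t Z) s iv (\<Sum>y\<in>Z. e y) e \<alpha>)"
proof -
  interpret unital_groupoid_action G s t mul iv e \<alpha>
    using assms by unfold_locales
  have finite_C: "finite (components_objs G s t)"
    and C_objs: "\<forall>Z\<in>components_objs G s t. Z \<subseteq> objs G s"
    using finite_objs comp_objs_subset unfolding components_objs_def by auto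
  show ?thesis
    using partial_galois_full_sub C_objs
      partial_galois_glue[OF finite_C C_objs components_disjoint ballI[OF morphism_in_component]]
    by blast
qed

end
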